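(* The function $K_2$ is continuous on $\big([0,1]\times[0,1]\big)\setminus\{(0,0)\}$.
   Context: Let $K:[0,1]\times[0,1]\to\mathbb R$ be defined by $K(x,y)=\frac12-\{(xy)^{-1}\}$ if $0<x,y\le 1$, and $K(x,y)=0$ if $0\le x,y\le1$ and $xy=0$, where $\{\alpha\}=\alpha-\lfloor\alpha\rfloor$. Define $K_2(x,y)=\int_0^1K(x,z)K(z,y)\,dz$ for $0\le x,y\le1$. *)

theory Defs
  imports "HOL-Analysis.Analysis"
begin

definition K :: "real \<Rightarrow> real \<Rightarrow> real" where
  "K x y = (if x * y = 0 then 0 else 1/2 - frac (1 / (x * y)))"

definition K2 :: "real \<Rightarrow> real \<Rightarrow> real" where
  "K2 x y = integral {0..1} (\<lambda>z. K x z * K z y)"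

end

theory Submission
  imports Defs
begin

text \<open>Here \<open>K\<^sub>2(x,y) = \<integral> K(x,z) K(y,z) dz\<close> is symmetric. Since \<open>|K| \<le> 1/2\<close>,
  \<open>|K\<^sub>2(x,y) - K\<^sub>2(x,y')| \<le> 1/2 \<parallel>K(y,\<cdot>) - K(y',\<cdot>)\<parallel>\<^sub>1\<close>, and for \<open>y' \<noteq> 0\<close> this tends to \<open>0\<close>
  as \<open>y \<rightarrow> y'\<close> by dominated convergence, because \<open>K(\<cdot>,z)\<close> is continuous off the countable set
  \<open>{1/(nz)}\<close>. So \<open>K\<^sub>2\<close> is continuous in \<open>y\<close> at \<open>y' \<noteq> 0\<close> uniformly in \<open>x\<close>, and by symmetry
  in \<open>x\<close> at \<open>x' \<noteq> 0\<close>. What remains is \<open>x \<rightarrow> 0\<close>: then \<open>K(x,\<cdot>)\<close> oscillates ever faster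
  and \<open>\<integral> K(x,z) g(z) dz \<rightarrow> 0\<close> for every bounded measurable \<open>g\<close>. For smooth \<open>g\<close> this follows
  by parts, against an explicit primitive of \<open>K(x,\<cdot>)\<close> of size \<open>O(x)\<close> built from the periodic
  primitive \<open>frac u (1 - frac u) / 2\<close> of the sawtooth \<open>1/2 - frac u\<close>; a general \<open>g\<close> is
  approximated in \<open>L\<^sup>1\<close> by polynomials.\<close>

definition sawtooth_primitive :: "real \<Rightarrow> real" where
  "sawtooth_primitive u = frac u * (1 - frac u) / 2"

lemma sawtooth_primitive_bounds: "0 \<le> sawtooth_primitive u" "sawtooth_primitive u \<le> 1/8"
proof -
  have "0 \<le> frac u" "frac u < 1" by (auto simp: frac_lt_1)
  then show "0 \<le> sawtooth_primitive u" by (simp add: sawtooth_primitive_def)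
  have "0 \<le> (frac u - 1/2)\<^sup>2" by simp
  then show "sawtooth_primitive u \<le> 1/8"
    by (simp add: sawtooth_primitive_def power2_eq_square algebra_simps)
qed

lemma has_real_derivative_frac: "u \<notin> \<int> \<Longrightarrow> (frac has_real_derivative 1) (at u)"
  unfolding frac_def[abs_def]
  using DERIV_diff[OF DERIV_ident floor_has_real_derivative[where f=id, simplified]] by simp

lemma has_real_derivative_sawtooth_primitive:
  assumes "u \<notin> \<int>"
  shows "(sawtooth_primitive has_real_derivative 1/2 - frac u) (at u)"
proof -
  have "((\<lambda>v. frac v * (1 - frac v)) has_real_derivative 1 * (1 - frac u) + (0 - 1) * frac u) (at u)"
    by (intro DERIV_mult DERIV_diff DERIV_const has_real_derivative_frac assms)
  from DERIV_cdivide[OF this, of 2] show ?thesis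
    unfolding sawtooth_primitive_def[abs_def] by (rule DERIV_cong) (simp add: field_simps)
qed

lemma isCont_sawtooth_primitive: "isCont sawtooth_primitive u"
proof (cases "u \<in> \<int>")
  case False
  then show ?thesis using has_real_derivative_sawtooth_primitive DERIV_isCont by blast
next
  case True
  then obtain m where m: "u = of_int m" by (auto elim: Ints_cases)
  have "sawtooth_primitive v = \<bar>v - u\<bar> * (1 - \<bar>v - u\<bar>) / 2" if "v \<in> ball u 1" for v
  proof (cases "u \<le> v")
    case True
    with that m have "\<lfloor>v\<rfloor> = m" by (intro floor_unique) (auto simp: dist_real_def)
    with True m show ?thesis by (simp add: sawtooth_primitive_def frac_def)
  next
    case False
    with that m have "\<lfloor>v\<rfloor> = m - 1" by (intro floor_unique) (auto simp: dist_real_def)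
    with m have "frac v = 1 - (u - v)" by (simp add: frac_def)
    moreover from False have "\<bar>v - u\<bar> = u - v" by simp
    ultimately show ?thesis by (simp only: sawtooth_primitive_def) (simp add: algebra_simps)
  qed
  then have near_u: "\<forall>\<^sub>F v in nhds u. sawtooth_primitive v = \<bar>v - u\<bar> * (1 - \<bar>v - u\<bar>) / 2"
    using eventually_nhds_in_open[of "ball u 1" u] by (auto elim: eventually_mono)
  have "isCont (\<lambda>v. \<bar>v - u\<bar> * (1 - \<bar>v - u\<bar>) / 2) u" by (intro continuous_intros) auto
  then show ?thesis using isCont_cong[OF near_u] by simp
qed

lemma K_commute: "K x y = K y x"
  by (simp add: K_def mult.commute)

lemma abs_K_le: "\<bar>K x y\<bar> \<le> 1/2"
  using frac_ge_0[of "1/(x*y)"] frac_lt_1[of "1/(x*y)"] by (simp add: K_def abs_if)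

lemma K_zero_left [simp]: "K 0 y = 0"
  by (simp add: K_def)

text \<open>\<open>0\<close> is always included: \<open>K x y\<close> oscillates without limit as \<open>x \<rightarrow> 0\<close>.\<close>
definition K_jumps :: "real \<Rightarrow> real set" where
  "K_jumps y = {z. z = 0 \<or> (y \<noteq> 0 \<and> 1/(z*y) \<in> \<int>)}"

lemma K_jumps_subset: "K_jumps y \<subseteq> range (\<lambda>n::int. 1/(of_int n * y))"
proof
  fix z assume "z \<in> K_jumps y"
  then consider "z = 0" | "y \<noteq> 0" "z \<noteq> 0" "1/(z*y) \<in> \<int>" by (auto simp: K_jumps_def)
  then show "z \<in> range (\<lambda>n::int. 1/(of_int n * y))"
  proof cases
    case 1
    then show ?thesis by (auto intro: image_eqI[of _ _ 0])
  next
    case 2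
    then obtain n where "1/(z*y) = of_int n" by (auto elim: Ints_cases)
    with 2 have "z * (of_int n * y) = 1" by (simp add: field_simps)
    then have "z = 1/(of_int n * y)" by (auto simp: eq_divide_eq)
    then show ?thesis by blast
  qed
qed

lemma countable_K_jumps: "countable (K_jumps y)"
  using countable_subset[OF K_jumps_subset] by blast

lemma finite_K_jumps_Icc:
  assumes "0 < x" "0 < a"
  shows "finite (K_jumps x \<inter> {a..b})"
proof -
  have "K_jumps x \<inter> {a..b} \<subseteq> (\<lambda>n::int. 1/(of_int n * x)) ` {0..\<lceil>1/(x*a)\<rceil>}"
  proof
    fix z assume z: "z \<in> K_jumps x \<inter> {a..b}"
    with assms have "0 < z" "1/(z*x) \<in> \<int>" "0 < 1/(z*x)" by (auto simp: K_jumps_def)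
    then obtain n where n: "1/(z*x) = of_int n" by (auto elim: Ints_cases)
    have "1/(z*x) \<le> 1/(x*a)"
      using assms z \<open>0 < z\<close> by (intro divide_left_mono) (auto simp: mult.commute)
    with n \<open>0 < 1/(z*x)\<close> have "n \<in> {0..\<lceil>1/(x*a)\<rceil>}"
      by (auto simp: le_ceiling_iff)
    moreover from n \<open>0 < z\<close> assms have "z * (of_int n * x) = 1" by (simp add: field_simps)
    then have "z = 1/(of_int n * x)" by (auto simp: eq_divide_eq)
    ultimately show "z \<in> (\<lambda>n::int. 1/(of_int n * x)) ` {0..\<lceil>1/(x*a)\<rceil>}" by blast
  qed
  then show ?thesis by (rule finite_subset) simp
qed

lemma K_jumps_swap: "y \<noteq> 0 \<Longrightarrow> z \<notin> K_jumps y \<Longrightarrow> y \<notin> K_jumps z"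
  by (simp add: K_jumps_def mult.commute)

lemma isCont_K_left:
  assumes "z \<notin> K_jumps y"
  shows "isCont (\<lambda>w. K w y) z"
proof (cases "y = 0")
  case True
  then show ?thesis by (simp add: K_def)
next
  case False
  with assms have z: "z \<noteq> 0" "1/(z*y) \<notin> \<int>" by (auto simp: K_jumps_def)
  have "\<forall>\<^sub>F w in nhds z. K w y = 1/2 - frac (1/(w*y))"
    using t1_space_nhds[OF z(1)] by eventually_elim (use False in \<open>simp add: K_def\<close>)
  moreover have "isCont (\<lambda>w. 1/2 - frac (1/(w*y))) z"
    using z False
    by (intro continuous_intros continuous_at_compose[OF _ continuous_frac, unfolded o_def]) auto
  ultimately show ?thesis by (simp add: isCont_cong)
qed

lemma continuous_on_K: "continuous_on (- K_jumps x) (K x)"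
proof -
  have "K x = (\<lambda>w. K w x)" by (simp add: fun_eq_iff K_commute)
  then show ?thesis by (auto intro!: continuous_at_imp_continuous_on isCont_K_left)
qed

lemma negligible_countable:
  fixes E :: "'a::euclidean_space set"
  shows "countable E \<Longrightarrow> negligible E"
  using negligible_countable_Union[of "(\<lambda>x. {x}) ` E"] by auto

lemma borel_measurable_continuous_off_countable:
  fixes f :: "'a::euclidean_space \<Rightarrow> 'b::euclidean_space"
  assumes "countable E" "continuous_on (S - E) f" "S \<in> sets lebesgue"
  shows "f \<in> borel_measurable (lebesgue_on S)"
proof -
  have E: "negligible E" using assms(1) by (rule negligible_countable)
  then have "S - E \<in> sets lebesgue"
    using assms(3) by (simp add: negligible_imp_sets sets.Diff)
  then have "f measurable_on (S - E)"
    using assms(2) continuous_imp_measurable_on_sets_lebesgue measurable_on_iff_borel_measurable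
    by blast
  then have "f measurable_on S"
    by (rule measurable_on_spike_set) (auto intro: negligible_subset[OF E])
  then show ?thesis using measurable_on_iff_borel_measurable[OF assms(3)] by blast
qed

lemma bounded_measurable_integrable_on_Icc:
  fixes f :: "real \<Rightarrow> real"
  assumes "f \<in> borel_measurable (lebesgue_on {a..b})" "\<And>z. z \<in> {a..b} \<Longrightarrow> \<bar>f z\<bar> \<le> B"
  shows "f integrable_on {a..b}"
  by (rule measurable_bounded_by_integrable_imp_integrable[OF assms(1), of "\<lambda>_. B"]) (use assms in auto)

lemma borel_measurable_K: "S \<in> sets lebesgue \<Longrightarrow> K x \<in> borel_measurable (lebesgue_on S)"
  by (rule borel_measurable_continuous_off_countable[OF countable_K_jumps])
     (auto intro: continuous_on_subset[OF continuous_on_K])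

lemma borel_measurable_continuous_Icc:
  fixes f :: "real \<Rightarrow> real"
  shows "continuous_on {a..b} f \<Longrightarrow> f \<in> borel_measurable (lebesgue_on {a..b})"
  by (rule continuous_imp_measurable_on_sets_lebesgue) auto

text \<open>As \<open>K x z\<close> is the derivative of \<open>sawtooth_primitive\<close> at \<open>1/(xz)\<close>, differentiating
  \<open>z\<^sup>2 * sawtooth_primitive (1/(xz))\<close> gives \<open>2 z sawtooth_primitive (1/(xz)) - K x z / x\<close>.\<close>
definition K_primitive :: "real \<Rightarrow> real \<Rightarrow> real \<Rightarrow> real" where
  "K_primitive x a z = x * (2 * integral {a..z} (\<lambda>t. t * sawtooth_primitive (1/(x*t)))
                            - z\<^sup>2 * sawtooth_primitive (1/(x*z)))"

lemma continuous_on_sawtooth_primitive_inverse: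
  assumes "0 < x" "0 < a"
  shows "continuous_on {a..b} (\<lambda>t. sawtooth_primitive (1/(x*t)))"
  by (rule continuous_on_compose2[of UNIV sawtooth_primitive])
     (use assms in \<open>auto intro!: continuous_intros continuous_at_imp_continuous_on
        isCont_sawtooth_primitive\<close>)

lemma continuous_on_K_primitive:
  assumes "0 < x" "0 < a"
  shows "continuous_on {a..b} (K_primitive x a)"
  unfolding K_primitive_def
  by (intro continuous_intros indefinite_integral_continuous_1 integrable_continuous_real
      continuous_on_sawtooth_primitive_inverse assms)

lemma has_real_derivative_K_primitive:
  assumes x: "0 < x" and z: "0 < a" "a < z" "z \<notin> K_jumps x"
  shows "(K_primitive x a has_real_derivative K x z) (at z)"
proof -
  have "0 < z" "1/(x*z) \<notin> \<int>" using x z by (auto simp: K_jumps_def mult.commute)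
  have "((\<lambda>z. 1/(x*z)) has_real_derivative - 1/(x*z\<^sup>2)) (at z)"
    using x \<open>0 < z\<close> by (auto intro!: derivative_eq_intros simp: power2_eq_square field_simps)
  from DERIV_chain2[OF has_real_derivative_sawtooth_primitive[OF \<open>1/(x*z) \<notin> \<int>\<close>] this]
  have d_saw: "((\<lambda>z. sawtooth_primitive (1/(x*z))) has_real_derivative
      (1/2 - frac (1/(x*z))) * (- 1/(x*z\<^sup>2))) (at z)" .
  have "continuous_on {a..z+1} (\<lambda>t. t * sawtooth_primitive (1/(x*t)))"
    by (intro continuous_intros continuous_on_sawtooth_primitive_inverse x z)
  from integral_has_real_derivative[OF this, of z] z
  have d_int: "((\<lambda>z. integral {a..z} (\<lambda>t. t * sawtooth_primitive (1/(x*t)))) has_real_derivative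
      z * sawtooth_primitive (1/(x*z))) (at z)"
    using at_within_Icc_at[of a z "z+1"] by simp
  show ?thesis
    unfolding K_primitive_def[abs_def]
    by (rule derivative_eq_intros d_int d_saw refl)+
       (use x \<open>0 < z\<close> in \<open>simp add: K_def power2_eq_square field_simps\<close>)
qed

lemma abs_K_primitive_le:
  assumes x: "0 < x" and z: "0 < a" "a \<le> z" "z \<le> 1"
  shows "\<bar>K_primitive x a z\<bar> \<le> x/4"
proof -
  define q where "q = (\<lambda>t. t * sawtooth_primitive (1/(x*t)))"
  have q: "0 \<le> q t \<and> q t \<le> 1/8" if "t \<in> {a..z}" for t
    using that z sawtooth_primitive_bounds[of "1/(x*t)"] mult_mono[of t 1 _ "1/8"]
    by (auto simp: q_def)
  have "continuous_on {a..z} q"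
    unfolding q_def by (intro continuous_intros continuous_on_sawtooth_primitive_inverse x z)
  then have "q integrable_on {a..z}" by (rule integrable_continuous_real)
  then have "0 \<le> integral {a..z} q" "integral {a..z} q \<le> integral {a..z} (\<lambda>_. 1/8)"
    using q by (intro integral_nonneg integral_le integrable_const_ivl; force)+
  then have int: "0 \<le> integral {a..z} q" "integral {a..z} q \<le> 1/8"
    using z by (auto simp: field_simps)
  have "z\<^sup>2 \<le> 1" using z by (simp add: power_le_one)
  then have sq: "0 \<le> z\<^sup>2 * sawtooth_primitive (1/(x*z))" "z\<^sup>2 * sawtooth_primitive (1/(x*z)) \<le> 1/8"
    using sawtooth_primitive_bounds[of "1/(x*z)"] mult_mono[of "z\<^sup>2" 1 _ "1/8"] by auto
  have "\<bar>K_primitive x a z\<bar> = x * \<bar>2 * integral {a..z} q - z\<^sup>2 * sawtooth_primitive (1/(x*z))\<bar>"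
    using x by (simp add: K_primitive_def q_def abs_mult)
  also have "\<dots> \<le> x * (1/4)"
  proof (rule mult_left_mono)
    show "\<bar>2 * integral {a..z} q - z\<^sup>2 * sawtooth_primitive (1/(x*z))\<bar> \<le> 1/4"
      using int sq unfolding abs_le_iff by linarith
  qed (use x in auto)
  finally show ?thesis by simp
qed

lemma abs_integral_mult_le_by_parts:
  fixes F f p p' :: "real \<Rightarrow> real"
  assumes "a \<le> b" "finite S" "continuous_on {a..b} F"
    and F': "\<And>z. z \<in> {a<..<b} - S \<Longrightarrow> (F has_real_derivative f z) (at z)"
    and p': "\<And>z. (p has_real_derivative p' z) (at z)" "continuous_on {a..b} p'"
    and F_le: "\<And>z. z \<in> {a..b} \<Longrightarrow> \<bar>F z\<bar> \<le> c"
    and p_le: "\<And>z. z \<in> {a..b} \<Longrightarrow> \<bar>p z\<bar> \<le> M" "\<And>z. z \<in> {a..b} \<Longrightarrow> \<bar>p' z\<bar> \<le> M"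
  shows "\<bar>integral {a..b} (\<lambda>z. f z * p z)\<bar> \<le> c * M * (2 + (b - a))"
proof -
  have "0 \<le> c" using F_le[of a] \<open>a \<le> b\<close> by auto
  have "continuous_on {a..b} p"
    using p'(1) by (intro continuous_at_imp_continuous_on ballI DERIV_isCont) blast
  have Fp': "continuous_on {a..b} (\<lambda>z. F z * p' z)"
    by (intro continuous_intros assms)
  define I where "I = integral {a..b} (\<lambda>z. F z * p' z)"
  have "((\<lambda>z. f z * p z) has_integral F b * p b - F a * p a - I) {a..b}"
  proof (rule integration_by_parts_interior_strong[OF bounded_bilinear_mult assms(2,1,3)
        \<open>continuous_on {a..b} p\<close>])
    show "(F has_vector_derivative f z) (at z)" "(p has_vector_derivative p' z) (at z)"
      if "z \<in> {a<..<b} - S" for z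
      using F'[OF that] p'(1) by (auto simp: has_real_derivative_iff_has_vector_derivative)
    show "((\<lambda>z. F z * p' z) has_integral F b * p b - F a * p a - (F b * p b - F a * p a - I)) {a..b}"
      using integrable_integral[OF integrable_continuous_real[OF Fp']] by (simp add: I_def)
  qed
  then have parts: "integral {a..b} (\<lambda>z. f z * p z) = F b * p b - F a * p a - I"
    by (rule integral_unique)
  have "\<bar>F z * p z\<bar> \<le> c * M" if "z \<in> {a..b}" for z
    unfolding abs_mult using that F_le p_le \<open>0 \<le> c\<close> by (intro mult_mono) auto
  then have ends: "\<bar>F a * p a\<bar> \<le> c * M" "\<bar>F b * p b\<bar> \<le> c * M" using \<open>a \<le> b\<close> by auto
  have "norm I \<le> integral {a..b} (\<lambda>_. c * M)"
    unfolding I_def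
  proof (rule integral_norm_bound_integral[OF integrable_continuous_real[OF Fp']])
    show "norm (F z * p' z) \<le> c * M" if "z \<in> {a..b}" for z
      unfolding real_norm_def abs_mult using that F_le p_le \<open>0 \<le> c\<close> by (intro mult_mono) auto
  qed auto
  then have "\<bar>I\<bar> \<le> c * M * (b - a)" using \<open>a \<le> b\<close> by (simp add: mult_ac)
  with parts ends show ?thesis
    unfolding abs_le_iff by (simp add: algebra_simps)
qed

lemma abs_integral_K_mult_le:
  fixes p p' :: "real \<Rightarrow> real"
  assumes x: "0 < x" "x \<le> 1"
    and p': "\<And>z. (p has_real_derivative p' z) (at z)" "continuous_on {0..1} p'"
    and p_le: "\<And>z. z \<in> {0..1} \<Longrightarrow> \<bar>p z\<bar> \<le> M" "\<And>z. z \<in> {0..1} \<Longrightarrow> \<bar>p' z\<bar> \<le> M"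
  shows "\<bar>integral {0..1} (\<lambda>z. K x z * p z)\<bar> \<le> 2 * M * x"
proof -
  have "0 \<le> M" using p_le(1)[of 0] by auto
  have "continuous_on UNIV p"
    using p'(1) by (intro continuous_at_imp_continuous_on ballI DERIV_isCont) blast
  then have "p \<in> borel_measurable (lebesgue_on {a..b})" for a b
    using borel_measurable_continuous_Icc continuous_on_subset by blast
  then have Kp_meas: "(\<lambda>z. K x z * p z) \<in> borel_measurable (lebesgue_on {a..b})" for a b
    by (intro borel_measurable_times borel_measurable_K) auto
  moreover have Kp_le: "\<bar>K x z * p z\<bar> \<le> 1/2 * M" if "z \<in> {0..1}" for z
    unfolding abs_mult using abs_K_le[of x z] p_le(1)[OF that] by (intro mult_mono) auto
  ultimately have "(\<lambda>z. K x z * p z) integrable_on {0..1}"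
    by (rule bounded_measurable_integrable_on_Icc)
  then have split: "integral {0..1} (\<lambda>z. K x z * p z)
      = integral {0..x} (\<lambda>z. K x z * p z) + integral {x..1} (\<lambda>z. K x z * p z)"
    using Henstock_Kurzweil_Integration.integral_combine[of 0 x 1] x by force
  txt \<open>The jumps of \<open>K x\<close> accumulate at \<open>0\<close>, so on \<open>[0,x]\<close> only \<open>|K| \<le> 1/2\<close> is used.\<close>
  have left: "\<bar>integral {0..x} (\<lambda>z. K x z * p z)\<bar> \<le> 1/2 * M * x"
  proof -
    have "norm (integral {0..x} (\<lambda>z. K x z * p z)) \<le> 1/2 * M * x"
    proof (rule integral_norm_bound_integral')
      show "norm (K x z * p z) \<le> 1/2 * M" if "z \<in> {0..x}" for z
        using Kp_le[of z] that x by auto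
      show "((\<lambda>_. 1/2 * M) has_integral 1/2 * M * x) {0..x}"
        using has_integral_const_real[of "1/2 * M" 0 x] x by (simp add: mult_ac)
    qed (use Kp_meas in auto)
    then show ?thesis by simp
  qed
  have "\<bar>integral {x..1} (\<lambda>z. K x z * p z)\<bar> \<le> x/4 * M * (2 + (1 - x))"
  proof (rule abs_integral_mult_le_by_parts)
    show "finite (K_jumps x \<inter> {x..1})" using finite_K_jumps_Icc x by blast
    show "continuous_on {x..1} (K_primitive x x)" using continuous_on_K_primitive x by blast
    show "(K_primitive x x has_real_derivative K x z) (at z)"
      if "z \<in> {x<..<1} - K_jumps x \<inter> {x..1}" for z
      using that x by (intro has_real_derivative_K_primitive) auto
    show "\<bar>K_primitive x x z\<bar> \<le> x/4" if "z \<in> {x..1}" for z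
      using that x by (intro abs_K_primitive_le) auto
  qed (use x p' p_le in \<open>auto intro: continuous_on_subset\<close>)
  also have "\<dots> \<le> 3/4 * M * x"
    using x \<open>0 \<le> M\<close> by (simp add: field_simps mult_left_mono)
  finally show ?thesis
    using split left \<open>0 \<le> M\<close> x unfolding abs_le_iff by linarith
qed

lemma integral_tendsto_zero_dominated_ae:
  fixes f :: "nat \<Rightarrow> real \<Rightarrow> real"
  assumes "negligible N" "\<And>n. f n integrable_on {a..b}"
    and "\<And>n z. z \<in> {a..b} \<Longrightarrow> \<bar>f n z\<bar> \<le> C"
    and "\<And>z. z \<in> {a..b} - N \<Longrightarrow> (\<lambda>n. f n z) \<longlonglongrightarrow> 0"
  shows "(\<lambda>n. integral {a..b} (f n)) \<longlonglongrightarrow> 0"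
proof -
  define g where "g n z = (if z \<in> N then 0 else f n z)" for n z
  have "g n integrable_on {a..b}" for n
    using integrable_spike[OF assms(2) assms(1)] by (simp add: g_def)
  then have "(\<lambda>n. integral {a..b} (g n)) \<longlonglongrightarrow> integral {a..b} (\<lambda>_. 0)"
  proof (rule dominated_convergence(2)[where h = "\<lambda>_. C"])
    show "norm (g n z) \<le> C" if "z \<in> {a..b}" for n z
      using assms(3)[OF that, of n] by (auto simp: g_def)
    show "(\<lambda>n. g n z) \<longlonglongrightarrow> 0" if "z \<in> {a..b}" for z
      using assms(4)[of z] that by (cases "z \<in> N") (auto simp: g_def)
  qed auto
  moreover have "integral {a..b} (f n) = integral {a..b} (g n)" for n
    by (rule integral_spike[OF assms(1)]) (simp add: g_def)
  ultimately show ?thesis by simp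
qed

lemma polynomial_L1_approximation:
  fixes g :: "real \<Rightarrow> real"
  assumes g: "g \<in> borel_measurable (lebesgue_on {a..b})" "\<And>z. z \<in> {a..b} \<Longrightarrow> \<bar>g z\<bar> \<le> B"
    and "0 < e"
  obtains p where "polynomial_function p" "integral {a..b} (\<lambda>z. \<bar>p z - g z\<bar>) < e"
proof -
  have "g measurable_on {a..b}"
    using g(1) measurable_on_iff_borel_measurable by (metis box_real(2) lmeasurable_cbox fmeasurableD)
  then obtain N F where N: "negligible N" and F: "\<And>n. continuous_on UNIV (F n)"
    and F_lim: "\<And>z. z \<notin> N \<Longrightarrow> (\<lambda>n. F n z) \<longlonglongrightarrow> (if z \<in> {a..b} then g z else 0)"
    unfolding measurable_on_def by blast
  txt \<open>Truncating at the bound of \<open>g\<close> keeps the approximants uniformly bounded, as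
    dominated convergence requires.\<close>
  define G where "G n z = max (- B) (min B (F n z))" for n z
  have "\<exists>p. polynomial_function p \<and> (\<forall>z\<in>{a..b}. norm (G n z - p z) < inverse (Suc n))" for n
    unfolding G_def
    by (intro Stone_Weierstrass_polynomial_function continuous_intros
        continuous_on_subset[OF F]) auto
  then obtain P where P: "\<And>n. polynomial_function (P n)"
    and P_G: "\<And>n z. z \<in> {a..b} \<Longrightarrow> \<bar>G n z - P n z\<bar> < inverse (Suc n)"
    by (metis real_norm_def)
  have "0 \<le> B" if "a \<le> b" using g(2)[of a] that by auto
  then have P_le: "\<bar>P n z\<bar> \<le> B + 1" if "z \<in> {a..b}" for n z
    using P_G[OF that, of n] that inverse_le_1_iff[of "real (Suc n)"]
    by (auto simp: G_def abs_le_iff)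
  have P_cont: "continuous_on {a..b} (P n)" for n
    using continuous_on_polymonial_function[OF P] continuous_on_subset by blast
  have "(\<lambda>n. integral {a..b} (\<lambda>z. \<bar>P n z - g z\<bar>)) \<longlonglongrightarrow> 0"
  proof (rule integral_tendsto_zero_dominated_ae[OF N])
    show "(\<lambda>z. \<bar>P n z - g z\<bar>) integrable_on {a..b}" for n
    proof (rule bounded_measurable_integrable_on_Icc)
      show "(\<lambda>z. \<bar>P n z - g z\<bar>) \<in> borel_measurable (lebesgue_on {a..b})"
        by (intro borel_measurable_abs borel_measurable_diff g(1)
            borel_measurable_continuous_Icc[OF P_cont])
      show "\<bar>\<bar>P n z - g z\<bar>\<bar> \<le> 2 * B + 1" if "z \<in> {a..b}" for z
        using P_le[OF that, of n] g(2)[OF that] by linarith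
    qed
    show "\<bar>\<bar>P n z - g z\<bar>\<bar> \<le> 2 * B + 1" if "z \<in> {a..b}" for n z
      using P_le[OF that, of n] g(2)[OF that] by linarith
    show "(\<lambda>n. \<bar>P n z - g z\<bar>) \<longlonglongrightarrow> 0" if z: "z \<in> {a..b} - N" for z
    proof -
      have "(\<lambda>n. G n z) \<longlonglongrightarrow> max (- B) (min B (g z))"
        unfolding G_def using F_lim[of z] z by (intro tendsto_intros) auto
      also have "max (- B) (min B (g z)) = g z" using g(2)[of z] z by auto
      finally have "(\<lambda>n. G n z) \<longlonglongrightarrow> g z" .
      moreover have "(\<lambda>n. P n z - G n z) \<longlonglongrightarrow> 0"
        by (rule Lim_null_comparison[OF _ LIMSEQ_inverse_real_of_nat])
           (use P_G z in \<open>auto intro!: always_eventually simp: abs_minus_commute less_imp_le\<close>)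
      ultimately have "(\<lambda>n. P n z - g z) \<longlonglongrightarrow> 0"
        using tendsto_add[of "\<lambda>n. P n z - G n z" 0 _ "\<lambda>n. G n z" "g z"]
        by (simp add: LIM_zero_iff)
      then show ?thesis by (rule tendsto_rabs_zero)
    qed
  qed
  then obtain n where "integral {a..b} (\<lambda>z. \<bar>P n z - g z\<bar>) < e"
    using order_tendstoD(2)[OF _ \<open>0 < e\<close>] by (metis (no_types, lifting) eventually_sequentially order.refl)
  with P that show ?thesis by blast
qed

lemma abs_integral_K_mult_diff_le:
  fixes g h :: "real \<Rightarrow> real"
  assumes meas: "g \<in> borel_measurable (lebesgue_on {a..b})" "h \<in> borel_measurable (lebesgue_on {a..b})"
    and le: "\<And>z. z \<in> {a..b} \<Longrightarrow> \<bar>g z\<bar> \<le> B" "\<And>z. z \<in> {a..b} \<Longrightarrow> \<bar>h z\<bar> \<le> B"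
  shows "\<bar>integral {a..b} (\<lambda>z. K x z * g z) - integral {a..b} (\<lambda>z. K x z * h z)\<bar>
           \<le> 1/2 * integral {a..b} (\<lambda>z. \<bar>g z - h z\<bar>)"
proof -
  have K_mult_le: "\<bar>K x z * u\<bar> \<le> 1/2 * \<bar>u\<bar>" for z u
    unfolding abs_mult using abs_K_le[of x z] by (intro mult_right_mono) auto
  have "(\<lambda>z. K x z * f z) integrable_on {a..b}"
    if f: "f \<in> borel_measurable (lebesgue_on {a..b})" "\<And>z. z \<in> {a..b} \<Longrightarrow> \<bar>f z\<bar> \<le> B" for f
  proof (rule bounded_measurable_integrable_on_Icc)
    show "(\<lambda>z. K x z * f z) \<in> borel_measurable (lebesgue_on {a..b})"
      by (intro borel_measurable_times borel_measurable_K f(1)) auto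
    show "\<bar>K x z * f z\<bar> \<le> 1/2 * B" if "z \<in> {a..b}" for z
      using K_mult_le[of z "f z"] f(2)[OF that] by linarith
  qed
  then have int: "(\<lambda>z. K x z * g z) integrable_on {a..b}" "(\<lambda>z. K x z * h z) integrable_on {a..b}"
    using meas le by blast+
  have "(\<lambda>z. \<bar>g z - h z\<bar>) integrable_on {a..b}"
  proof (rule bounded_measurable_integrable_on_Icc)
    show "(\<lambda>z. \<bar>g z - h z\<bar>) \<in> borel_measurable (lebesgue_on {a..b})"
      by (intro borel_measurable_abs borel_measurable_diff meas)
    show "\<bar>\<bar>g z - h z\<bar>\<bar> \<le> 2 * B" if "z \<in> {a..b}" for z
      using le[OF that] by linarith
  qed
  then have "(\<lambda>z. 1/2 * \<bar>g z - h z\<bar>) integrable_on {a..b}"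
    by (rule integrable_on_mult_right)
  then have "norm (integral {a..b} (\<lambda>z. K x z * g z - K x z * h z))
      \<le> integral {a..b} (\<lambda>z. 1/2 * \<bar>g z - h z\<bar>)"
  proof (rule integral_norm_bound_integral[OF integrable_diff[OF int]])
    show "norm (K x z * g z - K x z * h z) \<le> 1/2 * \<bar>g z - h z\<bar>" for z
      using K_mult_le[of z "g z - h z"] by (simp add: right_diff_distrib)
  qed
  then show ?thesis
    by (simp add: Henstock_Kurzweil_Integration.integral_diff[OF int])
qed

lemma tendsto_integral_K_mult_zero:
  fixes g :: "real \<Rightarrow> real"
  assumes g: "g \<in> borel_measurable (lebesgue_on {0..1})" "\<And>z. z \<in> {0..1} \<Longrightarrow> \<bar>g z\<bar> \<le> B"
  shows "((\<lambda>x. integral {0..1} (\<lambda>z. K x z * g z)) \<longlongrightarrow> 0) (at 0 within {0..1})"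
proof (rule tendstoI)
  fix e :: real assume "0 < e"
  then obtain p where p: "polynomial_function p" "integral {0..1} (\<lambda>z. \<bar>p z - g z\<bar>) < e/2"
    using polynomial_L1_approximation[OF g, of "e/2"] by auto
  obtain p' where p': "polynomial_function p'" "\<And>z. (p has_vector_derivative p' z) (at z)"
    using has_vector_derivative_polynomial_function[OF p(1)] by blast
  have cont: "continuous_on {0..1} p" "continuous_on {0..1} p'"
    using continuous_on_polymonial_function p(1) p'(1) continuous_on_subset by blast+
  have "continuous_on {0..1} (\<lambda>z. \<bar>p z\<bar> + \<bar>p' z\<bar>)"
    using cont by (intro continuous_intros)
  then obtain M where "0 \<le> M" and M: "\<And>z. z \<in> {0..1} \<Longrightarrow> norm (\<bar>p z\<bar> + \<bar>p' z\<bar>) \<le> M"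
    using continuous_on_compact_bound[OF compact_Icc] by blast
  have p_le: "\<bar>p z\<bar> \<le> M" "\<bar>p' z\<bar> \<le> M" if "z \<in> {0..1}" for z
    using M[OF that] by auto
  have approx: "\<bar>integral {0..1} (\<lambda>z. K x z * g z) - integral {0..1} (\<lambda>z. K x z * p z)\<bar> < e/4" for x
  proof -
    have "\<bar>integral {0..1} (\<lambda>z. K x z * g z) - integral {0..1} (\<lambda>z. K x z * p z)\<bar>
        \<le> 1/2 * integral {0..1} (\<lambda>z. \<bar>g z - p z\<bar>)"
    proof (rule abs_integral_K_mult_diff_le[where B = "max B M"])
      show "\<bar>g z\<bar> \<le> max B M" "\<bar>p z\<bar> \<le> max B M" if "z \<in> {0..1}" for z
        using g(2)[OF that] p_le(1)[OF that] by auto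
    qed (use g(1) borel_measurable_continuous_Icc[OF cont(1)] in auto)
    with p(2) show ?thesis by (simp add: abs_minus_commute)
  qed
  show "\<forall>\<^sub>F x in at 0 within {0..1}. dist (integral {0..1} (\<lambda>z. K x z * g z)) 0 < e"
    unfolding eventually_at
  proof (intro exI[of _ "e / (4 * (M + 1))"] conjI ballI impI)
    show "0 < e / (4 * (M + 1))" using \<open>0 < e\<close> \<open>0 \<le> M\<close> by simp
    fix x :: real assume "x \<in> {0..1}" "x \<noteq> 0 \<and> dist x 0 < e / (4 * (M + 1))"
    then have x: "0 < x" "x \<le> 1" "x * (4 * (M + 1)) < e"
      using \<open>0 \<le> M\<close> by (auto simp: dist_real_def pos_less_divide_eq)
    have "\<bar>integral {0..1} (\<lambda>z. K x z * p z)\<bar> \<le> 2 * M * x"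
      using p'(2) cont(2) p_le x(1,2)
      by (intro abs_integral_K_mult_le) (auto simp: has_real_derivative_iff_has_vector_derivative)
    also have "\<dots> < e/2" using x \<open>0 \<le> M\<close> by (simp add: algebra_simps)
    finally show "dist (integral {0..1} (\<lambda>z. K x z * g z)) 0 < e"
      using approx[of x] unfolding dist_real_def abs_less_iff by simp
  qed
qed

lemma K2_eq: "K2 x y = integral {0..1} (\<lambda>z. K x z * K y z)"
  unfolding K2_def by (simp add: K_commute[of _ y])

lemma K2_commute: "K2 x y = K2 y x"
  unfolding K2_eq by (simp add: mult.commute)

lemma K2_zero_left: "K2 0 y = 0"
  by (simp add: K2_def)

lemma abs_K2_diff_le: "\<bar>K2 x y - K2 x y'\<bar> \<le> 1/2 * integral {0..1} (\<lambda>z. \<bar>K y z - K y' z\<bar>)"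
  unfolding K2_eq
proof (rule abs_integral_K_mult_diff_le[where B = "1/2"])
  show "K y \<in> borel_measurable (lebesgue_on {0..1})" "K y' \<in> borel_measurable (lebesgue_on {0..1})"
    by (simp_all add: borel_measurable_K)
qed (rule abs_K_le)+

lemma isCont_integral_abs_K_diff:
  assumes "y0 \<noteq> 0"
  shows "isCont (\<lambda>y. integral {0..1} (\<lambda>z. \<bar>K y z - K y0 z\<bar>)) y0"
proof (rule continuous_at_sequentiallyI)
  fix ys :: "nat \<Rightarrow> real" assume ys: "ys \<longlonglongrightarrow> y0"
  have le: "\<bar>\<bar>K (ys n) z - K y0 z\<bar>\<bar> \<le> 1" for n z
    using abs_K_le[of "ys n" z] abs_K_le[of y0 z] by linarith
  have "(\<lambda>n. integral {0..1} (\<lambda>z. \<bar>K (ys n) z - K y0 z\<bar>)) \<longlonglongrightarrow> 0"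
  proof (rule integral_tendsto_zero_dominated_ae[OF negligible_countable[OF countable_K_jumps] _ le])
    show "(\<lambda>z. \<bar>K (ys n) z - K y0 z\<bar>) integrable_on {0..1}" for n
    proof (rule bounded_measurable_integrable_on_Icc[OF _ le])
      show "(\<lambda>z. \<bar>K (ys n) z - K y0 z\<bar>) \<in> borel_measurable (lebesgue_on {0..1})"
        by (intro borel_measurable_abs borel_measurable_diff borel_measurable_K) simp_all
    qed
    show "(\<lambda>n. \<bar>K (ys n) z - K y0 z\<bar>) \<longlonglongrightarrow> 0" if "z \<in> {0..1} - K_jumps y0" for z
    proof -
      have "y0 \<notin> K_jumps z" using K_jumps_swap[OF assms] that by blast
      then have "(\<lambda>n. K (ys n) z) \<longlonglongrightarrow> K y0 z"
        using isCont_tendsto_compose[OF isCont_K_left ys] by blast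
      then show ?thesis by (simp add: LIM_zero tendsto_rabs_zero)
    qed
  qed
  then show "(\<lambda>n. integral {0..1} (\<lambda>z. \<bar>K (ys n) z - K y0 z\<bar>))
      \<longlonglongrightarrow> integral {0..1} (\<lambda>z. \<bar>K y0 z - K y0 z\<bar>)"
    by simp
qed

lemma tendsto_K2_diff_zero:
  assumes "y0 \<noteq> 0" "(Y \<longlongrightarrow> y0) F"
  shows "((\<lambda>t. K2 (X t) (Y t) - K2 (X t) y0) \<longlongrightarrow> 0) F"
proof (rule Lim_null_comparison)
  show "\<forall>\<^sub>F t in F. norm (K2 (X t) (Y t) - K2 (X t) y0)
          \<le> 1/2 * integral {0..1} (\<lambda>z. \<bar>K (Y t) z - K y0 z\<bar>)"
    unfolding real_norm_def by (intro always_eventually allI abs_K2_diff_le)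
  have "((\<lambda>t. integral {0..1} (\<lambda>z. \<bar>K (Y t) z - K y0 z\<bar>)) \<longlongrightarrow> 0) F"
    using isCont_tendsto_compose[OF isCont_integral_abs_K_diff[OF assms(1)] assms(2)] by simp
  then show "((\<lambda>t. 1/2 * integral {0..1} (\<lambda>z. \<bar>K (Y t) z - K y0 z\<bar>)) \<longlongrightarrow> 0) F"
    by (rule tendsto_mult_right_zero)
qed

lemma continuous_within_K2_left:
  assumes "x0 \<in> {0..1}"
  shows "continuous (at x0 within {0..1}) (\<lambda>x. K2 x y)"
proof (cases "x0 = 0")
  case True
  have "((\<lambda>x. K2 x y) \<longlongrightarrow> 0) (at 0 within {0..1})"
    unfolding K2_eq
    by (rule tendsto_integral_K_mult_zero[OF borel_measurable_K abs_K_le]) simp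
  with True show ?thesis by (simp add: continuous_within K2_zero_left)
next
  case False
  have "((\<lambda>x. K2 y x - K2 y x0) \<longlongrightarrow> 0) (at x0)"
    using tendsto_K2_diff_zero[OF False tendsto_ident_at, of "\<lambda>_. y"] .
  then have "isCont (\<lambda>x. K2 x y) x0"
    by (simp add: isCont_def LIM_zero_iff K2_commute[of _ y])
  then show ?thesis by (rule continuous_at_imp_continuous_within)
qed

lemma tendsto_K2:
  fixes X Y :: "'a \<Rightarrow> real"
  assumes "y0 \<noteq> 0" "x0 \<in> {0..1}"
    and "(X \<longlongrightarrow> x0) F" "\<forall>\<^sub>F t in F. X t \<in> {0..1}" and "(Y \<longlongrightarrow> y0) F"
  shows "((\<lambda>t. K2 (X t) (Y t)) \<longlongrightarrow> K2 x0 y0) F"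
proof -
  have "((\<lambda>t. K2 (X t) y0) \<longlongrightarrow> K2 x0 y0) F"
    by (rule continuous_within_tendsto_compose[OF continuous_within_K2_left[OF assms(2)] assms(4,3)])
  from tendsto_add[OF tendsto_K2_diff_zero[OF assms(1,5), where X = X] this] show ?thesis
    by simp
qed

lemma tendsto_K2_at_within:
  fixes S :: "(real \<times> real) set"
  assumes "S \<subseteq> {0..1} \<times> {0..1}" "p \<in> {0..1} \<times> {0..1}" "p \<noteq> (0, 0)"
  shows "((\<lambda>q. K2 (fst q) (snd q)) \<longlongrightarrow> K2 (fst p) (snd p)) (at p within S)"
proof -
  have lim: "(fst \<longlongrightarrow> fst p) (at p within S)" "(snd \<longlongrightarrow> snd p) (at p within S)"
    by (intro tendsto_intros)+
  have "\<forall>\<^sub>F q in at p within S. q \<in> {0..1} \<times> {0..1}"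
    using assms(1) by (auto simp: eventually_at_filter intro: always_eventually)
  then have in_Icc: "\<forall>\<^sub>F q in at p within S. fst q \<in> {0..1}" "\<forall>\<^sub>F q in at p within S. snd q \<in> {0..1}"
    by (auto simp: mem_Times_iff elim: eventually_mono)
  from assms(2,3) consider "snd p \<noteq> 0" "fst p \<in> {0..1}" | "fst p \<noteq> 0" "snd p \<in> {0..1}"
    by (cases p) auto
  then show ?thesis
  proof cases
    case 1
    then show ?thesis by (rule tendsto_K2[OF _ _ lim(1) in_Icc(1) lim(2)])
  next
    case 2
    have "(\<lambda>q. K2 (snd q) (fst q)) = (\<lambda>q. K2 (fst q) (snd q))"
      by (simp add: fun_eq_iff K2_commute)
    with tendsto_K2[OF 2 lim(2) in_Icc(2) lim(1)] show ?thesis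
      by (simp add: K2_commute[of "snd p"])
  qed
qed

theorem theorem2p7:
  shows "continuous_on (({0..1} \<times> {0..1}) - {(0, 0)}) (\<lambda>(x::real, y::real). K2 x y)"
  unfolding continuous_on_def case_prod_beta' by (intro ballI tendsto_K2_at_within) auto

end
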